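(* For all sufficiently large $R$ the following holds. Let $V\subset\mathcal D_R$ be finite, $G_V$ the graph on $V$ in which distinct points are adjacent iff their hyperbolic distance is at most $R$, and let the demands $D_{i,j}$ be computed from $V$. If $D_{i_{\max},j}=0$ for all $j=0,\dots,n_{i_{\max}}-1$, then $G_V$ has a Hamilton cycle.
   Context: $\mathcal D_R$ is the hyperbolic disk (curvature $-1$) of radius $R$ around the origin, with polar coordinates $(r,\theta)$, $r\in[0,R)$, $\theta\in(0,2\pi]$. Tiling: $i_{\max}=\lceil 0.9R/(2\ln 2)\rceil$, $n_i=2^{4-i+\lfloor R/(2\ln 2)\rfloor}$ for integers $0\le i\le i_{\max}$; $(i,j)$ is admissible if $0\le i\le i_{\max}$, $0\le j<n_i$; $T_{i,j}=\{(r,\theta)\in\mathcal D_R:\ R-2(i+1)\ln 2\le r<R-2i\ln 2,\ 2\pi j/n_i<\theta\le 2\pi(j+1)/n_i\}$. For a point set $V$, $N(T_{i,j})=|V\cap T_{i,j}|$. Demands: $D_{0,j}=N(T_{0,j})$ if $N(T_{0,j})\in\{1,2\}$ and $D_{0,j}=0$ otherwise; for $0<i\le i_{\max}$, $D_{i,j}=\max\{D_{i-1,2j}+D_{i-1,2j+1}+3-N(T_{i,j}),0\}$. *)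

theory Defs
  imports Complex_Main
begin

text \<open>Points of the hyperbolic disk are represented by polar coordinates (r, theta).\<close>
type_synonym hpoint = "real \<times> real"

definition hdisk :: "real \<Rightarrow> hpoint set" where
  "hdisk R = {(r, \<theta>). 0 \<le> r \<and> r < R \<and> 0 < \<theta> \<and> \<theta> \<le> 2 * pi}"

text \<open>Hyperbolic distance (curvature -1) via the hyperbolic law of cosines.\<close>
definition hdist :: "hpoint \<Rightarrow> hpoint \<Rightarrow> real" where
  "hdist p q = arcosh (cosh (fst p) * cosh (fst q)
                       - sinh (fst p) * sinh (fst q) * cos (snd p - snd q))"

definition imax :: "real \<Rightarrow> nat" where
  "imax R = nat \<lceil>0.9 * R / (2 * ln 2)\<rceil>"

definition ncount :: "real \<Rightarrow> nat \<Rightarrow> nat" where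
  "ncount R i = 2 ^ nat (4 - int i + \<lfloor>R / (2 * ln 2)\<rfloor>)"

definition tile :: "real \<Rightarrow> nat \<Rightarrow> nat \<Rightarrow> hpoint set" where
  "tile R i j = {(r, \<theta>) \<in> hdisk R.
      R - 2 * (real i + 1) * ln 2 \<le> r \<and> r < R - 2 * real i * ln 2 \<and>
      2 * pi * real j / real (ncount R i) < \<theta> \<and>
      \<theta> \<le> 2 * pi * (real j + 1) / real (ncount R i)}"

definition Ncnt :: "real \<Rightarrow> hpoint set \<Rightarrow> nat \<Rightarrow> nat \<Rightarrow> nat" where
  "Ncnt R V i j = card (V \<inter> tile R i j)"

fun demand :: "real \<Rightarrow> hpoint set \<Rightarrow> nat \<Rightarrow> nat \<Rightarrow> int" where
  "demand R V 0 j = (if Ncnt R V 0 j \<in> {1, 2} then int (Ncnt R V 0 j) else 0)"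
| "demand R V (Suc i) j =
     max (demand R V i (2 * j) + demand R V i (2 * j + 1) + 3 - int (Ncnt R V (Suc i) j)) 0"

definition hadj :: "real \<Rightarrow> hpoint \<Rightarrow> hpoint \<Rightarrow> bool" where
  "hadj R p q \<longleftrightarrow> p \<noteq> q \<and> hdist p q \<le> R"

definition has_hamilton_cycle :: "('a \<Rightarrow> 'a \<Rightarrow> bool) \<Rightarrow> 'a set \<Rightarrow> bool" where
  "has_hamilton_cycle E V \<longleftrightarrow> (\<exists>xs. distinct xs \<and> set xs = V \<and> 3 \<le> length xs \<and>
      (\<forall>k < length xs. E (xs ! k) (xs ! ((k + 1) mod length xs))))"

end

theory Submission
  imports Defs
begin

text \<open>Call the cone of a tile the tile together with all its descendants. By induction on the
  level, the points of \<open>V\<close> in the cone of \<open>T\<^sub>i\<^sub>,\<^sub>j\<close> can be covered by at most \<open>D\<^sub>i\<^sub>,\<^sub>j + 1\<close>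
  vertex-disjoint paths of \<open>G\<^sub>V\<close>: by the hyperbolic law of cosines every point of a tile is
  adjacent to every point of its cone, so each point of \<open>T\<^sub>i\<^sub>+\<^sub>1\<^sub>,\<^sub>j\<close> can join two of the paths
  covering the two child cones. If \<open>D\<^sub>i\<^sub>m\<^sub>a\<^sub>x\<^sub>,\<^sub>j = 0\<close>, the top tile has more points than
  there are child paths, so its cone is covered by a single path with both ends in the top tile.
  All top tiles and all points further in lie within radius \<open>R/2\<close>, where any two points are
  adjacent; this lets the top paths and the remaining inner points be closed into a Hamilton
  cycle.\<close>

lemma exp_2_ln_2_mult: "exp (2 * real i * ln 2) = 4 ^ i"
proof -
  have "exp (2 * real i * ln 2) = exp (2 * ln 2) ^ i"
    using exp_of_nat_mult[of i "2 * ln 2"] by (simp add: ac_simps)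
  also have "exp (2 * ln 2) = (exp (ln 2))\<^sup>2"
    by (simp add: exp_double[symmetric] mult_2)
  finally show ?thesis by simp
qed

lemma one_minus_cos_le: "1 - cos x \<le> x\<^sup>2 / 2" for x :: real
proof -
  have "cos x = 1 - 2 * sin (x / 2) ^ 2" using cos_double_sin[of "x / 2"] by simp
  moreover have "sin (x / 2) ^ 2 \<le> (x / 2) ^ 2"
    using abs_sin_x_le_abs_x[of "x / 2"] abs_le_square_iff by blast
  ultimately show ?thesis by (simp add: power_divide)
qed

lemma cosh_law_eq:
  "cosh a * cosh b - sinh a * sinh b * cos \<phi> = cosh (a - b) + sinh a * sinh b * (1 - cos \<phi>)"
  for a b \<phi> :: real
  by (simp add: cosh_diff algebra_simps)

lemma sinh_mult_one_minus_cos_le: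
  fixes a b \<phi> :: real
  assumes "0 \<le> a" "0 \<le> b"
  shows "sinh a * sinh b * (1 - cos \<phi>) \<le> exp a * exp b * \<phi>\<^sup>2 / 8"
proof -
  have half_exp: "sinh x \<le> exp x / 2" for x :: real
    by (simp add: sinh_def)
  have "sinh a * sinh b \<le> exp a / 2 * (exp b / 2)"
    by (rule mult_mono[OF half_exp half_exp]) (use assms in auto)
  hence "sinh a * sinh b * (1 - cos \<phi>) \<le> exp a / 2 * (exp b / 2) * (\<phi>\<^sup>2 / 2)"
    by (rule mult_mono[OF _ one_minus_cos_le]) auto
  thus ?thesis by simp
qed

lemma hdist_le_of_cosh_le:
  assumes "0 \<le> a" "0 \<le> b" "0 \<le> R"
    and "cosh a * cosh b - sinh a * sinh b * cos (\<alpha> - \<beta>) \<le> cosh R"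
  shows "hdist (a, \<alpha>) (b, \<beta>) \<le> R"
proof -
  define Y where "Y = cosh a * cosh b - sinh a * sinh b * cos (\<alpha> - \<beta>)"
  have "1 \<le> Y"
    using cosh_real_ge_1[of "a - b"] assms(1,2) unfolding Y_def cosh_law_eq
    by (smt (verit) mult_nonneg_nonneg cos_le_one sinh_real_nonneg_iff)
  hence "arcosh Y \<le> arcosh (cosh R)"
    using assms(4) cosh_real_ge_1[of R] unfolding Y_def by (simp add: not_less[symmetric])
  thus ?thesis using arcosh_cosh_real[OF assms(3)] unfolding hdist_def Y_def by simp
qed

lemma hdist_commute: "hdist p q = hdist q p"
  unfolding hdist_def by (simp add: mult.commute cos_diff)

lemma hadj_commute: "hadj R p q \<longleftrightarrow> hadj R q p"
  unfolding hadj_def using hdist_commute by metis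

lemma hadj_if_radius_sum_le:
  assumes "p \<in> hdisk R" "q \<in> hdisk R" "fst p + fst q \<le> R" "p \<noteq> q"
  shows "hadj R p q"
proof -
  obtain a \<alpha> b \<beta> where p: "p = (a, \<alpha>)" and q: "q = (b, \<beta>)" by (cases p, cases q) auto
  have ab: "0 \<le> a" "0 \<le> b" using assms(1,2) p q by (auto simp: hdisk_def)
  have "sinh a * sinh b * (- cos (\<alpha> - \<beta>)) \<le> sinh a * sinh b * 1"
    using ab by (intro mult_left_mono) auto
  hence "cosh a * cosh b - sinh a * sinh b * cos (\<alpha> - \<beta>) \<le> cosh (a + b)"
    by (simp add: cosh_add)
  also have "\<dots> \<le> cosh R" using assms(3) p q ab by (subst cosh_real_nonneg_le_iff) auto
  finally have "hdist (a, \<alpha>) (b, \<beta>) \<le> R" using ab assms(3) p q by (intro hdist_le_of_cosh_le) auto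
  thus ?thesis using assms(4) p q unfolding hadj_def by simp
qed

lemma imax_bounds:
  assumes "0 \<le> R"
  shows "0.9 * R \<le> 2 * real (imax R) * ln 2" and "2 * real (imax R) * ln 2 < 0.9 * R + 2 * ln 2"
proof -
  have "0 \<le> 0.9 * R / (2 * ln 2)" using assms by simp
  hence im: "real (imax R) = real_of_int \<lceil>0.9 * R / (2 * ln 2)\<rceil>" unfolding imax_def by simp
  have "0.9 * R / (2 * ln 2) \<le> real (imax R)" "real (imax R) < 0.9 * R / (2 * ln 2) + 1"
    unfolding im by linarith+
  thus "0.9 * R \<le> 2 * real (imax R) * ln 2" "2 * real (imax R) * ln 2 < 0.9 * R + 2 * ln 2"
    by (simp_all add: field_simps)
qed

lemma imax_radius_le_half:
  assumes "0 \<le> R"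
  shows "R - 2 * real (imax R) * ln 2 \<le> R / 2"
  using imax_bounds(1)[OF assms] assms by linarith

lemma one_le_imax:
  assumes "0 < R"
  shows "1 \<le> imax R"
proof -
  have "0 < 0.9 * R / (2 * ln 2)" using assms by simp
  thus ?thesis unfolding imax_def by linarith
qed

lemma imax_le_floor:
  assumes "0 \<le> R"
  shows "int (imax R) \<le> \<lfloor>R / (2 * ln 2)\<rfloor> + 1"
proof -
  have "0.9 * R / (2 * ln 2) \<le> R / (2 * ln 2)" by (intro divide_right_mono) (use assms in auto)
  hence "\<lceil>0.9 * R / (2 * ln 2)\<rceil> \<le> \<lfloor>R / (2 * ln 2)\<rfloor> + 1" by linarith
  moreover have "0 \<le> \<lfloor>R / (2 * ln 2)\<rfloor>" using assms by simp
  ultimately show ?thesis unfolding imax_def by simp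
qed

lemma ncount_Suc:
  assumes "0 \<le> R" "Suc i \<le> imax R"
  shows "ncount R i = 2 * ncount R (Suc i)"
proof -
  have "nat (4 - int i + \<lfloor>R / (2 * ln 2)\<rfloor>) = Suc (nat (4 - int (Suc i) + \<lfloor>R / (2 * ln 2)\<rfloor>))"
    using imax_le_floor[OF assms(1)] assms(2) by linarith
  thus ?thesis unfolding ncount_def by simp
qed

text \<open>Since \<open>n\<^sub>i * 2^i = 2^(4 + \<lfloor>R / (2 ln 2)\<rfloor>)\<close>, the angular width \<open>2\<pi> / n\<^sub>i\<close> of a
  level-\<open>i\<close> tile is \<open>O(2^i e^(-R/2))\<close>, which compensates the radius \<open>R - 2 i ln 2\<close> of its points.\<close>
lemma exp_le_ncount_mult_pow2:
  assumes "0 \<le> R" "i \<le> imax R"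
  shows "64 * exp R \<le> (real (ncount R i) * 2 ^ i)\<^sup>2"
proof -
  have "0 \<le> \<lfloor>R / (2 * ln 2)\<rfloor>" using assms(1) by simp
  then obtain f :: nat where f: "\<lfloor>R / (2 * ln 2)\<rfloor> = int f"
    using nonneg_int_cases by metis
  have "i \<le> f + 1" using imax_le_floor[OF assms(1)] assms(2) f by linarith
  hence "ncount R i = 2 ^ (4 + f - i)"
    unfolding ncount_def f by (simp add: nat_eq_iff)
  hence "real (ncount R i) * 2 ^ i = 2 ^ (4 + f)"
    using \<open>i \<le> f + 1\<close> by (simp flip: power_add)
  hence "(real (ncount R i) * 2 ^ i)\<^sup>2 = 256 * 4 ^ f"
    unfolding power2_eq_square by (simp add: power_add flip: power_mult_distrib)
  moreover have "R - 2 * ln 2 \<le> 2 * real f * ln 2"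
    using real_of_int_floor_add_one_gt[of "R / (2 * ln 2)"] f by (simp add: field_simps)
  hence "exp (R - 2 * real 1 * ln 2) \<le> exp (2 * real f * ln 2)" by simp
  hence "exp R / 4 \<le> 4 ^ f" using exp_2_ln_2_mult[of 1] by (simp add: exp_diff exp_2_ln_2_mult)
  ultimately show ?thesis by simp
qed

lemma cosh_radial_le:
  assumes R: "400 \<le> R" and i: "i \<le> imax R" and "a < R"
    and "R - 2 * (real i + 1) * ln 2 \<le> a" "R - 2 * (real i + 1) * ln 2 \<le> b" "b < R - 2 * real i * ln 2"
  shows "cosh (a - b) \<le> exp R / 5 + 2"
proof -
  have "2 * real i * ln 2 \<le> 2 * real (imax R) * ln 2" using i by simp
  also have "\<dots> < 0.9 * R + 2 * ln 2" using R by (intro imax_bounds) simp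
  finally have "a - b \<le> 0.9 * R + 2 * real 2 * ln 2" using assms(3,5) by (simp add: algebra_simps)
  hence "exp (a - b) \<le> exp (0.9 * R + 2 * real 2 * ln 2)" by simp
  hence "exp (a - b) \<le> exp (0.9 * R) * 16" by (simp only: exp_add exp_2_ln_2_mult) simp
  moreover have "b - a \<le> 2 * real 1 * ln 2" using assms(4,6) by (simp add: algebra_simps)
  hence "exp (b - a) \<le> exp (2 * real 1 * ln 2)" by simp
  hence "exp (b - a) \<le> 4" by (simp only: exp_2_ln_2_mult) simp
  moreover have "41 * exp (0.9 * R) \<le> exp R"
  proof -
    have "41 \<le> exp (0.1 * R)" using exp_ge_add_one_self[of "0.1 * R"] R by linarith
    hence "41 * exp (0.9 * R) \<le> exp (0.1 * R) * exp (0.9 * R)" by simp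
    thus ?thesis by (simp flip: exp_add)
  qed
  moreover have "cosh (a - b) = (exp (a - b) + exp (b - a)) / 2" by (simp add: cosh_def)
  ultimately show ?thesis using exp_gt_zero[of R] by argo
qed

lemma sinh_angular_le:
  assumes R: "0 \<le> R" and i: "i \<le> imax R" and "0 \<le> a" "a < R" "0 \<le> b" "b < R - 2 * real i * ln 2"
    and \<phi>: "\<bar>\<phi>\<bar> \<le> 2 * pi / real (ncount R i)"
  shows "sinh a * sinh b * (1 - cos \<phi>) \<le> exp R / 8"
proof -
  define n where "n = real (ncount R i) * 2 ^ i"
  have n: "64 * exp R \<le> n\<^sup>2" unfolding n_def by (rule exp_le_ncount_mult_pow2[OF R i])
  have n0: "0 < real (ncount R i)" by (simp add: ncount_def)
  have "exp b \<le> exp (R - 2 * real i * ln 2)" using assms(6) by simp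
  hence eb: "exp b \<le> exp R / 4 ^ i" by (simp add: exp_diff exp_2_ln_2_mult)
  have "\<phi>\<^sup>2 \<le> (2 * pi / real (ncount R i))\<^sup>2"
    using power_mono[OF \<phi> abs_ge_zero, of 2] by simp
  hence "exp a * exp b * \<phi>\<^sup>2 \<le> exp R * (exp R / 4 ^ i) * (2 * pi / real (ncount R i))\<^sup>2"
    using eb assms(4) by (intro mult_mono) auto
  also have "\<dots> = exp R * exp R * (4 * pi\<^sup>2) / n\<^sup>2"
  proof -
    have "(4::real) ^ i = (2 ^ i)\<^sup>2" unfolding power2_eq_square by (simp flip: power_mult_distrib)
    thus ?thesis unfolding n_def using n0 by (simp add: field_simps power_mult_distrib)
  qed
  also have "\<dots> \<le> exp R * exp R * (4 * pi\<^sup>2) / (64 * exp R)"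
  proof (rule divide_left_mono)
    show "0 < n\<^sup>2 * (64 * exp R)" using n exp_gt_zero[of R] by (intro mult_pos_pos) auto
  qed (use n in auto)
  also have "\<dots> \<le> exp R"
  proof -
    have "pi\<^sup>2 \<le> 4\<^sup>2" using pi_less_4 by (intro power_mono) auto
    thus ?thesis by (simp add: field_simps)
  qed
  finally show ?thesis using sinh_mult_one_minus_cos_le[OF assms(3,5), of \<phi>] by simp
qed

text \<open>The tile \<open>T(i, j)\<close> together with all its descendants, where the children of \<open>T(i + 1, j)\<close>
  are \<open>T(i, 2j)\<close> and \<open>T(i, 2j + 1)\<close>: the part of its angular sector from its inner radius outwards.\<close>
definition cone :: "real \<Rightarrow> nat \<Rightarrow> nat \<Rightarrow> hpoint set" where
  "cone R i j = {(r, \<theta>) \<in> hdisk R. R - 2 * (real i + 1) * ln 2 \<le> r \<and>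
      2 * pi * real j / real (ncount R i) < \<theta> \<and> \<theta> \<le> 2 * pi * (real j + 1) / real (ncount R i)}"

lemma tile_subset_cone: "tile R i j \<subseteq> cone R i j"
  unfolding tile_def cone_def by auto

lemma cone_0: "cone R 0 j = tile R 0 j"
  unfolding cone_def tile_def hdisk_def by auto

lemma cone_angle_diff_le:
  assumes "(a, \<alpha>) \<in> cone R i j" "(b, \<beta>) \<in> cone R i j"
  shows "\<bar>\<alpha> - \<beta>\<bar> \<le> 2 * pi / real (ncount R i)"
proof -
  have "2 * pi * (real j + 1) / real (ncount R i) - 2 * pi * real j / real (ncount R i)
      = 2 * pi / real (ncount R i)"
    by (simp add: diff_divide_distrib[symmetric] algebra_simps)
  thus ?thesis using assms unfolding cone_def by (auto simp: abs_le_iff)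
qed

lemma hadj_cone_tile:
  assumes R: "400 \<le> R" and i: "i \<le> imax R"
    and p: "p \<in> cone R i j" and q: "q \<in> tile R i j" and "p \<noteq> q"
  shows "hadj R p q"
proof -
  obtain a \<alpha> b \<beta> where pq: "p = (a, \<alpha>)" "q = (b, \<beta>)" by (cases p, cases q) auto
  have a: "0 \<le> a" "a < R" "R - 2 * (real i + 1) * ln 2 \<le> a"
    using p pq unfolding cone_def hdisk_def by auto
  have b: "0 \<le> b" "R - 2 * (real i + 1) * ln 2 \<le> b" "b < R - 2 * real i * ln 2"
    using q pq unfolding tile_def hdisk_def by auto
  have \<phi>: "\<bar>\<alpha> - \<beta>\<bar> \<le> 2 * pi / real (ncount R i)"
    using cone_angle_diff_le p q tile_subset_cone pq by blast
  have "cosh a * cosh b - sinh a * sinh b * cos (\<alpha> - \<beta>)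
      = cosh (a - b) + sinh a * sinh b * (1 - cos (\<alpha> - \<beta>))"
    by (rule cosh_law_eq)
  also have "\<dots> \<le> (exp R / 5 + 2) + exp R / 8"
    using cosh_radial_le[OF R i a(2,3) b(2,3)] sinh_angular_le[OF _ i a(1,2) b(1,3) \<phi>] R
    by (intro add_mono) auto
  also have "\<dots> \<le> exp R / 2"
    using exp_ge_add_one_self[of R] R by linarith
  also have "\<dots> \<le> cosh R" by (simp add: cosh_def)
  finally have "hdist p q \<le> R" using a(1) b(1) R pq by (simp add: hdist_le_of_cosh_le)
  thus ?thesis using assms(5) unfolding hadj_def by simp
qed

lemma cone_disjoint:
  assumes "j \<noteq> j'"
  shows "cone R i j \<inter> cone R i j' = {}"
proof -
  define n where "n = real (ncount R i)"
  have n0: "0 < n" unfolding n_def ncount_def by simp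
  have separated: "\<not> (\<theta> \<le> 2 * pi * (real a + 1) / n \<and> 2 * pi * real b / n < \<theta>)"
    if "a < b" for a b :: nat and \<theta>
  proof -
    have "2 * pi * (real a + 1) / n \<le> 2 * pi * real b / n"
      using that n0 by (intro divide_right_mono mult_left_mono) auto
    thus ?thesis by linarith
  qed
  show ?thesis
    using separated[of j j'] separated[of j' j] assms unfolding cone_def n_def[symmetric]
    by (cases "j < j'") (auto simp: linorder_neq_iff)
qed

lemma cone_Suc:
  assumes "0 \<le> R" "Suc i \<le> imax R"
  shows "cone R (Suc i) j = tile R (Suc i) j \<union> cone R i (2 * j) \<union> cone R i (2 * j + 1)"
    and "tile R (Suc i) j \<inter> (cone R i (2 * j) \<union> cone R i (2 * j + 1)) = {}"
    and "cone R i (2 * j) \<inter> cone R i (2 * j + 1) = {}"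
proof -
  define n where "n = real (ncount R (Suc i))"
  have n_child: "real (ncount R i) = 2 * n" unfolding n_def using ncount_Suc[OF assms] by simp
  have n0: "0 < n" unfolding n_def ncount_def by simp
  define lo mid hi where "lo = 2 * pi * real j / n" and "mid = pi * (2 * real j + 1) / n"
    and "hi = 2 * pi * (real j + 1) / n"
  define c c' where "c = R - 2 * (real i + 1) * ln 2" and "c' = R - 2 * (real (Suc i) + 1) * ln 2"
  have "cone R (Suc i) j = {(r, t) \<in> hdisk R. c' \<le> r \<and> lo < t \<and> t \<le> hi}"
    unfolding cone_def lo_def hi_def c'_def n_def ..
  moreover have "tile R (Suc i) j = {(r, t) \<in> hdisk R. c' \<le> r \<and> r < c \<and> lo < t \<and> t \<le> hi}"
    unfolding tile_def lo_def hi_def c_def c'_def n_def by (simp add: algebra_simps)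
  moreover have "2 * pi * real (2 * j) / (2 * n) = lo" "2 * pi * (real (2 * j) + 1) / (2 * n) = mid"
    "2 * pi * real (2 * j + 1) / (2 * n) = mid" "2 * pi * (real (2 * j + 1) + 1) / (2 * n) = hi"
    unfolding lo_def mid_def hi_def using n0 by (simp_all add: field_simps)
  hence "cone R i (2 * j) = {(r, t) \<in> hdisk R. c \<le> r \<and> lo < t \<and> t \<le> mid}"
    and "cone R i (2 * j + 1) = {(r, t) \<in> hdisk R. c \<le> r \<and> mid < t \<and> t \<le> hi}"
    unfolding cone_def n_child c_def by simp_all
  moreover have "lo < mid" "mid < hi" "c' \<le> c"
    unfolding lo_def mid_def hi_def c_def c'_def using n0 by (simp_all add: field_simps)
  ultimately show "cone R (Suc i) j = tile R (Suc i) j \<union> cone R i (2 * j) \<union> cone R i (2 * j + 1)"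
    and "tile R (Suc i) j \<inter> (cone R i (2 * j) \<union> cone R i (2 * j + 1)) = {}"
    and "cone R i (2 * j) \<inter> cone R i (2 * j + 1) = {}"
    by auto
qed

lemma ex_cone:
  assumes p: "p \<in> hdisk R" "R - 2 * (real i + 1) * ln 2 \<le> fst p"
  shows "\<exists>j < ncount R i. p \<in> cone R i j"
proof -
  obtain r t where pp: "p = (r, t)" by (cases p)
  define n where "n = ncount R i"
  have n0: "0 < real n" unfolding n_def ncount_def by simp
  have t: "0 < t" "t \<le> 2 * pi" using p pp by (auto simp: hdisk_def)
  define j where "j = nat (\<lceil>t * real n / (2 * pi)\<rceil> - 1)"
  have "0 < t * real n / (2 * pi)" "t * real n / (2 * pi) \<le> real n"
    using t n0 by (simp_all add: field_simps)
  hence "real j < t * real n / (2 * pi)" "t * real n / (2 * pi) \<le> real j + 1" "j < n"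
    unfolding j_def by linarith+
  hence "2 * pi * real j / real n < t" "t \<le> 2 * pi * (real j + 1) / real n" "j < n"
    using n0 pi_gt_zero by (simp_all add: field_simps)
  thus ?thesis using p pp unfolding cone_def n_def by auto
qed

definition path_cover :: "('a \<Rightarrow> 'a \<Rightarrow> bool) \<Rightarrow> 'a set \<Rightarrow> 'a list list \<Rightarrow> bool" where
  "path_cover E S ps \<longleftrightarrow> distinct (concat ps) \<and> set (concat ps) = S \<and>
     (\<forall>p\<in>set ps. p \<noteq> [] \<and> successively E p)"

lemma path_cover_append:
  "path_cover E A ps \<Longrightarrow> path_cover E B qs \<Longrightarrow> A \<inter> B = {} \<Longrightarrow> path_cover E (A \<union> B) (ps @ qs)"
  unfolding path_cover_def by auto

lemma successively_if_clique:
  "\<forall>x\<in>set xs. \<forall>y\<in>set xs. x \<noteq> y \<longrightarrow> E x y \<Longrightarrow> distinct xs \<Longrightarrow> successively E xs"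
  by (induction xs rule: induct_list012) auto

lemma path_cover_clique:
  assumes "finite S" "\<forall>x\<in>S. \<forall>y\<in>S. x \<noteq> y \<longrightarrow> E x y"
  shows "\<exists>ps. path_cover E S ps \<and> length ps \<le> 1"
proof -
  obtain xs where xs: "distinct xs" "set xs = S" using finite_distinct_list[OF assms(1)] by blast
  have "successively E xs" using successively_if_clique assms(2) xs by metis
  hence "path_cover E S (if xs = [] then [] else [xs])" using xs unfolding path_cover_def by auto
  thus ?thesis by (intro exI[of _ "if xs = [] then [] else [xs]"]) simp
qed

lemma path_cover_singletons:
  assumes "finite S"
  shows "\<exists>ps. path_cover E S ps \<and> (\<forall>p\<in>set ps. hd p \<in> S \<and> last p \<in> S)"
proof -
  obtain xs where xs: "distinct xs" "set xs = S" using finite_distinct_list[OF assms] by blast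
  have "concat (map (\<lambda>x. [x]) xs) = xs" by (induction xs) auto
  hence "path_cover E S (map (\<lambda>x. [x]) xs)" using xs unfolding path_cover_def by auto
  thus ?thesis using xs by (intro exI[of _ "map (\<lambda>x. [x]) xs"]) auto
qed

lemma path_cover_UN:
  fixes n :: nat
  assumes "\<forall>j<n. \<exists>ps. path_cover E (S j) ps \<and> (\<forall>p\<in>set ps. hd p \<in> K \<and> last p \<in> K)"
    and "\<forall>j<n. \<forall>j'<n. j \<noteq> j' \<longrightarrow> S j \<inter> S j' = {}"
  shows "\<exists>ps. path_cover E (\<Union>j<n. S j) ps \<and> (\<forall>p\<in>set ps. hd p \<in> K \<and> last p \<in> K)"
  using assms
proof (induction n)
  case 0
  show ?case by (intro exI[of _ "[]"]) (simp add: path_cover_def)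
next
  case (Suc n)
  obtain ps where ps: "path_cover E (\<Union>j<n. S j) ps" "\<forall>p\<in>set ps. hd p \<in> K \<and> last p \<in> K"
    using Suc.IH Suc.prems less_SucI by blast
  obtain qs where qs: "path_cover E (S n) qs" "\<forall>p\<in>set qs. hd p \<in> K \<and> last p \<in> K"
    using Suc.prems(1) by blast
  have "S j \<inter> S n = {}" if "j < n" for j using Suc.prems(2) that by simp
  hence "(\<Union>j<n. S j) \<inter> S n = {}" by blast
  hence "path_cover E ((\<Union>j<n. S j) \<union> S n) (ps @ qs)" by (rule path_cover_append[OF ps(1) qs(1)])
  moreover have "(\<Union>j<Suc n. S j) = (\<Union>j<n. S j) \<union> S n" by (simp add: lessThan_Suc Un_commute)
  ultimately show ?case using ps(2) qs(2) by (intro exI[of _ "ps @ qs"]) auto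
qed

lemma path_cover_insert_universal:
  assumes "path_cover E A qs" "t \<notin> A" "\<forall>x\<in>A. E x t \<and> E t x"
  shows "\<exists>qs'. path_cover E (insert t A) qs' \<and> length qs' \<le> max 1 (length qs - 1)"
proof (cases qs rule: remdups_adj.cases)
  case 1
  hence "path_cover E (insert t A) [[t]]" using assms(1) unfolding path_cover_def by simp
  thus ?thesis by fastforce
next
  case (2 q)
  hence q: "q \<noteq> []" "successively E q" "distinct q" "set q = A" using assms(1) unfolding path_cover_def by auto
  moreover have "E (last q) t" using assms(3) q(1,4) last_in_set by blast
  ultimately have "successively E (q @ [t])" by (simp add: successively_append_iff)
  hence "path_cover E (insert t A) [q @ [t]]" using q assms(2) unfolding path_cover_def by auto
  thus ?thesis by fastforce
next
  case (3 q1 q2 rest)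
  have q: "q1 \<noteq> []" "successively E q1" "q2 \<noteq> []" "successively E q2" "set q1 \<union> set q2 \<subseteq> A"
    using assms(1) 3 unfolding path_cover_def by auto
  hence "E (last q1) t" "E t (hd q2)" using assms(3) last_in_set hd_in_set by blast+
  hence "successively E (q1 @ t # q2)" using q by (cases q2) (auto simp: successively_append_iff)
  hence "path_cover E (insert t A) ((q1 @ t # q2) # rest)"
    using assms(1,2) q 3 unfolding path_cover_def by auto
  thus ?thesis using 3 by fastforce
qed

lemma path_cover_absorb_universal:
  assumes "finite T" "path_cover E A ps" "A \<inter> T = {}"
    and "\<forall>x\<in>A \<union> T. \<forall>y\<in>T. x \<noteq> y \<longrightarrow> E x y \<and> E y x"
  shows "\<exists>qs. path_cover E (A \<union> T) qs \<and> length qs \<le> max 1 (length ps - card T)"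
  using assms
proof (induction T rule: finite_induct)
  case empty
  thus ?case by auto
next
  case (insert t F)
  obtain qs where qs: "path_cover E (A \<union> F) qs" "length qs \<le> max 1 (length ps - card F)"
    using insert by blast
  have "t \<notin> A \<union> F" "\<forall>x\<in>A \<union> F. E x t \<and> E t x" using insert by auto
  then obtain qs' where "path_cover E (insert t (A \<union> F)) qs'" "length qs' \<le> max 1 (length qs - 1)"
    using path_cover_insert_universal[OF qs(1)] by blast
  moreover have "card (insert t F) = Suc (card F)" using insert by simp
  ultimately show ?case using qs(2) by (intro exI[of _ qs']) auto
qed

lemma path_cover_wrap:
  assumes "path_cover E S qs" "length qs \<le> 1" "t\<^sub>0 \<notin> S" "t\<^sub>1 \<notin> S" "t\<^sub>0 \<noteq> t\<^sub>1" "E t\<^sub>0 t\<^sub>1"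
    and "\<forall>x\<in>S. E t\<^sub>0 x \<and> E x t\<^sub>1"
  shows "path_cover E (insert t\<^sub>0 (insert t\<^sub>1 S)) [t\<^sub>0 # concat qs @ [t\<^sub>1]]"
proof -
  define xs where "xs = concat qs"
  have xs: "successively E xs" "set xs = S"
    using assms(1,2) unfolding path_cover_def xs_def by (cases qs, simp_all)
  have "successively E (xs @ [t\<^sub>1])"
    using xs assms(7) last_in_set by (fastforce simp: successively_append_iff)
  moreover have "E t\<^sub>0 (hd (xs @ [t\<^sub>1]))" using xs(2) assms(6,7) by (cases xs) auto
  ultimately have "successively E (t\<^sub>0 # xs @ [t\<^sub>1])" by (cases "xs @ [t\<^sub>1]") auto
  thus ?thesis using assms(1,3-5) unfolding path_cover_def xs_def by auto
qed

lemma path_cover_absorb_universal_ends: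
  assumes "finite T" "path_cover E A ps" "A \<inter> T = {}"
    and "\<forall>x\<in>A \<union> T. \<forall>y\<in>T. x \<noteq> y \<longrightarrow> E x y \<and> E y x"
    and "length ps < card T" "2 \<le> card T"
  shows "\<exists>q. path_cover E (A \<union> T) [q] \<and> hd q \<in> T \<and> last q \<in> T"
proof -
  obtain t\<^sub>0 t\<^sub>1 where t: "t\<^sub>0 \<in> T" "t\<^sub>1 \<in> T" "t\<^sub>0 \<noteq> t\<^sub>1"
    using card_le_Suc0_iff_eq[OF assms(1)] assms(6) by auto
  define T' where "T' = T - {t\<^sub>0, t\<^sub>1}"
  obtain qs where qs: "path_cover E (A \<union> T') qs" "length qs \<le> max 1 (length ps - card T')"
    using path_cover_absorb_universal[of T' E A ps] assms(1-4) unfolding T'_def by blast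
  have "card T' = card T - 2" unfolding T'_def using t assms(1) by (simp add: card_Diff_subset)
  hence "length qs \<le> 1" using qs(2) assms(5) by simp
  hence "path_cover E (insert t\<^sub>0 (insert t\<^sub>1 (A \<union> T'))) [t\<^sub>0 # concat qs @ [t\<^sub>1]]"
  proof (rule path_cover_wrap[OF qs(1)])
    show "\<forall>x\<in>A \<union> T'. E t\<^sub>0 x \<and> E x t\<^sub>1"
    proof
      fix x assume "x \<in> A \<union> T'"
      hence "x \<in> A \<union> T" "x \<noteq> t\<^sub>0" "x \<noteq> t\<^sub>1" using assms(3) t unfolding T'_def by auto
      thus "E t\<^sub>0 x \<and> E x t\<^sub>1" using assms(4) t by simp
    qed
    show "E t\<^sub>0 t\<^sub>1" using assms(4) t by blast
  qed (use assms(3) t in \<open>auto simp: T'_def\<close>)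
  moreover have "insert t\<^sub>0 (insert t\<^sub>1 (A \<union> T')) = A \<union> T" using t unfolding T'_def by auto
  ultimately show ?thesis using t by fastforce
qed

lemma successively_concat:
  assumes "\<forall>p\<in>set Q. p \<noteq> [] \<and> successively E p \<and> hd p \<in> K \<and> last p \<in> K"
    and "distinct (concat Q)" "\<forall>x\<in>K. \<forall>y\<in>K. x \<noteq> y \<longrightarrow> E x y"
  shows "successively E (concat Q)"
  using assms(1,2)
proof (induction Q rule: induct_list012)
  case (3 p q Q)
  have "last p \<in> set p" "hd q \<in> set q" using "3.prems"(1) by (simp_all add: last_in_set hd_in_set)
  moreover have "last p \<noteq> hd q" using "3.prems"(2) calculation by auto
  ultimately have "E (last p) (hd (concat (q # Q)))" using "3.prems"(1) assms(3) by auto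
  thus ?case using 3 by (auto simp: successively_append_iff)
qed simp_all

lemma has_hamilton_cycle_if_path_cover:
  assumes "path_cover E V Q" "\<forall>p\<in>set Q. hd p \<in> K \<and> last p \<in> K"
    and "\<forall>x\<in>K. \<forall>y\<in>K. x \<noteq> y \<longrightarrow> E x y" "3 \<le> card V"
  shows "has_hamilton_cycle E V"
proof -
  define xs where "xs = concat Q"
  have Q: "\<forall>p\<in>set Q. p \<noteq> [] \<and> successively E p \<and> hd p \<in> K \<and> last p \<in> K"
    and xs: "distinct xs" "set xs = V" using assms(1,2) unfolding path_cover_def xs_def by auto
  have len: "length xs = card V" using distinct_card[OF xs(1)] xs(2) by simp
  have "successively E xs" unfolding xs_def using successively_concat[OF Q _ assms(3)] xs(1) xs_def by simp
  hence step: "E (xs ! k) (xs ! Suc k)" if "Suc k < length xs" for k using that successively_nth by blast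
  have "Q \<noteq> []" using len assms(4) unfolding xs_def by auto
  hence "hd xs = hd (hd Q)" using Q unfolding xs_def by (simp add: hd_concat)
  have "concat Q = concat (butlast Q) @ last Q"
    using \<open>Q \<noteq> []\<close> by (metis append_butlast_last_id concat.simps concat_append self_append_conv)
  hence "last xs = last (last Q)" using Q \<open>Q \<noteq> []\<close> unfolding xs_def by simp
  have "hd xs \<in> K" "last xs \<in> K"
    using Q \<open>Q \<noteq> []\<close> \<open>hd xs = hd (hd Q)\<close> \<open>last xs = last (last Q)\<close> by auto
  moreover have "last xs \<noteq> hd xs"
    using xs(1) len assms(4) by (cases xs rule: rev_cases) (auto simp: hd_append)
  ultimately have "E (last xs) (hd xs)" using assms(3) by blast
  moreover have "xs \<noteq> []" using len assms(4) by auto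
  ultimately have wrap: "E (xs ! (length xs - 1)) (xs ! 0)" by (simp add: hd_conv_nth last_conv_nth)
  have "E (xs ! k) (xs ! ((k + 1) mod length xs))" if "k < length xs" for k
  proof (cases "Suc k < length xs")
    case False
    hence "Suc k = length xs" using that by simp
    hence "k = length xs - 1" "(k + 1) mod length xs = 0" by auto
    thus ?thesis using wrap by simp
  qed (use step in simp)
  thus ?thesis unfolding has_hamilton_cycle_def using xs len assms(4) by auto
qed

lemma hadj_cone_tile_both:
  assumes "400 \<le> R" "i \<le> imax R"
  shows "\<forall>x\<in>cone R i j. \<forall>y\<in>tile R i j. x \<noteq> y \<longrightarrow> hadj R x y \<and> hadj R y x"
  using hadj_cone_tile[OF assms] hadj_commute by blast

lemma demand_nonneg: "0 \<le> demand R V i j"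
  by (cases i) simp_all

lemma Ncnt_ge_if_demand_eq_0:
  "demand R V (Suc i) j = 0 \<Longrightarrow> demand R V i (2 * j) + demand R V i (2 * j + 1) + 3 \<le> int (Ncnt R V (Suc i) j)"
  by simp

lemma cone_Suc_path_cover_split:
  assumes R: "400 \<le> R" and i: "Suc i \<le> imax R" and "finite V"
    and ps: "path_cover (hadj R) (V \<inter> cone R i (2 * j)) ps\<^sub>1" "path_cover (hadj R) (V \<inter> cone R i (2 * j + 1)) ps\<^sub>2"
  obtains A where "path_cover (hadj R) A (ps\<^sub>1 @ ps\<^sub>2)" "A \<inter> (V \<inter> tile R (Suc i) j) = {}"
    "A \<union> (V \<inter> tile R (Suc i) j) = V \<inter> cone R (Suc i) j"
    "\<forall>x\<in>A \<union> (V \<inter> tile R (Suc i) j). \<forall>y\<in>V \<inter> tile R (Suc i) j. x \<noteq> y \<longrightarrow> hadj R x y \<and> hadj R y x"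
proof
  note split = cone_Suc[OF _ i, of j] 
  show "path_cover (hadj R) (V \<inter> cone R i (2 * j) \<union> V \<inter> cone R i (2 * j + 1)) (ps\<^sub>1 @ ps\<^sub>2)"
    using split(3) R by (intro path_cover_append[OF ps]) auto
  show "(V \<inter> cone R i (2 * j) \<union> V \<inter> cone R i (2 * j + 1)) \<union> V \<inter> tile R (Suc i) j = V \<inter> cone R (Suc i) j"
    using split(1) R by auto
  show "(V \<inter> cone R i (2 * j) \<union> V \<inter> cone R i (2 * j + 1)) \<inter> (V \<inter> tile R (Suc i) j) = {}"
    using split(2) R by auto
  show "\<forall>x\<in>(V \<inter> cone R i (2 * j) \<union> V \<inter> cone R i (2 * j + 1)) \<union> V \<inter> tile R (Suc i) j.
          \<forall>y\<in>V \<inter> tile R (Suc i) j. x \<noteq> y \<longrightarrow> hadj R x y \<and> hadj R y x"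
  proof (intro ballI impI)
    fix x y assume x: "x \<in> (V \<inter> cone R i (2 * j) \<union> V \<inter> cone R i (2 * j + 1)) \<union> V \<inter> tile R (Suc i) j"
      and y: "y \<in> V \<inter> tile R (Suc i) j" and "x \<noteq> y"
    have "x \<in> cone R (Suc i) j" using x split(1) R by auto
    thus "hadj R x y \<and> hadj R y x"
      using hadj_cone_tile_both[OF R i, of j] y \<open>x \<noteq> y\<close> by simp
  qed
qed

lemma cone_path_cover:
  assumes R: "400 \<le> R" and V: "finite V"
  shows "i \<le> imax R \<Longrightarrow> \<exists>ps. path_cover (hadj R) (V \<inter> cone R i j) ps \<and> int (length ps) \<le> demand R V i j + 1"
proof (induction i arbitrary: j)
  case 0
  have "\<forall>x\<in>V \<inter> cone R 0 j. \<forall>y\<in>V \<inter> cone R 0 j. x \<noteq> y \<longrightarrow> hadj R x y"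
    using hadj_cone_tile[OF R, of 0] cone_0 by blast
  then obtain ps where "path_cover (hadj R) (V \<inter> cone R 0 j) ps" "length ps \<le> 1"
    using path_cover_clique V by blast
  thus ?case using demand_nonneg[of R V 0 j] by (intro exI[of _ ps]) auto
next
  case (Suc i)
  obtain ps\<^sub>1 ps\<^sub>2 where ps: "path_cover (hadj R) (V \<inter> cone R i (2 * j)) ps\<^sub>1"
      "path_cover (hadj R) (V \<inter> cone R i (2 * j + 1)) ps\<^sub>2"
      "int (length ps\<^sub>1) \<le> demand R V i (2 * j) + 1" "int (length ps\<^sub>2) \<le> demand R V i (2 * j + 1) + 1"
    using Suc.IH Suc.prems Suc_leD by blast
  define T where "T = V \<inter> tile R (Suc i) j"
  have T: "finite T" "card T = Ncnt R V (Suc i) j" unfolding T_def Ncnt_def using V by simp_all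
  obtain A where A: "path_cover (hadj R) A (ps\<^sub>1 @ ps\<^sub>2)" "A \<inter> T = {}" "A \<union> T = V \<inter> cone R (Suc i) j"
      "\<forall>x\<in>A \<union> T. \<forall>y\<in>T. x \<noteq> y \<longrightarrow> hadj R x y \<and> hadj R y x"
    using cone_Suc_path_cover_split[OF R Suc.prems V ps(1,2)] unfolding T_def by blast
  then obtain qs where qs: "path_cover (hadj R) (V \<inter> cone R (Suc i) j) qs"
      "length qs \<le> max 1 (length (ps\<^sub>1 @ ps\<^sub>2) - card T)"
    using path_cover_absorb_universal[OF T(1) A(1,2,4)] A(3) by auto
  hence "int (length qs) \<le> max 1 (int (length ps\<^sub>1) + int (length ps\<^sub>2) - int (card T))"
    by (simp add: of_nat_diff split: if_splits)
  hence "int (length qs) \<le> demand R V (Suc i) j + 1" using ps(3,4) T(2) by simp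
  thus ?case using qs(1) by blast
qed

lemma top_cone_path:
  assumes R: "400 \<le> R" and V: "finite V" and d: "demand R V (imax R) j = 0"
  shows "\<exists>q. path_cover (hadj R) (V \<inter> cone R (imax R) j) [q] \<and> hd q \<in> tile R (imax R) j \<and> last q \<in> tile R (imax R) j"
proof -
  obtain i where i: "imax R = Suc i" using one_le_imax[of R] R by (cases "imax R") auto
  have IH: "\<exists>ps. path_cover (hadj R) (V \<inter> cone R i j') ps \<and> int (length ps) \<le> demand R V i j' + 1"
    for j' using cone_path_cover[OF R V, of i] i by simp
  obtain ps\<^sub>1 ps\<^sub>2 where ps: "path_cover (hadj R) (V \<inter> cone R i (2 * j)) ps\<^sub>1"
      "path_cover (hadj R) (V \<inter> cone R i (2 * j + 1)) ps\<^sub>2"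
      "int (length ps\<^sub>1) \<le> demand R V i (2 * j) + 1" "int (length ps\<^sub>2) \<le> demand R V i (2 * j + 1) + 1"
    using IH[of "2 * j"] IH[of "2 * j + 1"] by blast
  define T where "T = V \<inter> tile R (Suc i) j"
  have T: "finite T" "card T = Ncnt R V (Suc i) j" unfolding T_def Ncnt_def using V by simp_all
  obtain A where A: "path_cover (hadj R) A (ps\<^sub>1 @ ps\<^sub>2)" "A \<inter> T = {}" "A \<union> T = V \<inter> cone R (Suc i) j"
      "\<forall>x\<in>A \<union> T. \<forall>y\<in>T. x \<noteq> y \<longrightarrow> hadj R x y \<and> hadj R y x"
    using cone_Suc_path_cover_split[OF R _ V ps(1,2)] i unfolding T_def by auto
  have "demand R V i (2 * j) + demand R V i (2 * j + 1) + 3 \<le> int (card T)"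
    using Ncnt_ge_if_demand_eq_0 d i T(2) by simp
  hence "length (ps\<^sub>1 @ ps\<^sub>2) < card T" "2 \<le> card T"
    using ps(3,4) demand_nonneg[of R V i "2 * j"] demand_nonneg[of R V i "2 * j + 1"] by simp_all
  then obtain q where "path_cover (hadj R) (A \<union> T) [q]" "hd q \<in> T" "last q \<in> T"
    using path_cover_absorb_universal_ends[OF T(1) A(1,2,4)] by blast
  thus ?thesis using A(3) i unfolding T_def by auto
qed

definition inner_disk :: "real \<Rightarrow> hpoint set" where
  "inner_disk R = {p \<in> hdisk R. fst p \<le> R / 2}"

lemma inner_disk_clique: "\<forall>x\<in>inner_disk R. \<forall>y\<in>inner_disk R. x \<noteq> y \<longrightarrow> hadj R x y"
  unfolding inner_disk_def by (auto intro: hadj_if_radius_sum_le)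

lemma tile_imax_subset_inner_disk:
  assumes "0 \<le> R"
  shows "tile R (imax R) j \<subseteq> inner_disk R"
  using imax_radius_le_half[OF assms] unfolding tile_def inner_disk_def by auto

lemma path_cover_ends_inner_disk:
  assumes R: "400 \<le> R" and V: "finite V" "V \<subseteq> hdisk R"
    and d: "\<forall>j < ncount R (imax R). demand R V (imax R) j = 0"
  shows "\<exists>ps. path_cover (hadj R) V ps \<and> (\<forall>p\<in>set ps. hd p \<in> inner_disk R \<and> last p \<in> inner_disk R)"
proof -
  define n where "n = ncount R (imax R)"
  define S where "S j = V \<inter> cone R (imax R) j" for j
  define C where "C = {p \<in> V. fst p < R - 2 * (real (imax R) + 1) * ln 2}"
  have "\<forall>j<n. \<exists>ps. path_cover (hadj R) (S j) ps \<and> (\<forall>p\<in>set ps. hd p \<in> inner_disk R \<and> last p \<in> inner_disk R)"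
  proof (intro allI impI)
    fix j assume "j < n"
    then obtain q where "path_cover (hadj R) (S j) [q]" "hd q \<in> tile R (imax R) j" "last q \<in> tile R (imax R) j"
      using top_cone_path[OF R V(1)] d unfolding S_def n_def by blast
    thus "\<exists>ps. path_cover (hadj R) (S j) ps \<and> (\<forall>p\<in>set ps. hd p \<in> inner_disk R \<and> last p \<in> inner_disk R)"
      using tile_imax_subset_inner_disk[of R j] R by (intro exI[of _ "[q]"]) auto
  qed
  moreover have "\<forall>j<n. \<forall>j'<n. j \<noteq> j' \<longrightarrow> S j \<inter> S j' = {}"
    unfolding S_def using cone_disjoint by blast
  ultimately obtain ps where ps: "path_cover (hadj R) (\<Union>j<n. S j) ps"
      "\<forall>p\<in>set ps. hd p \<in> inner_disk R \<and> last p \<in> inner_disk R"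
    using path_cover_UN by blast
  obtain cs where cs: "path_cover (hadj R) C cs" "\<forall>p\<in>set cs. hd p \<in> C \<and> last p \<in> C"
    using path_cover_singletons[of C] V(1) unfolding C_def by auto
  have "R - 2 * (real (imax R) + 1) * ln 2 \<le> R - 2 * real (imax R) * ln 2"
    by (simp add: algebra_simps)
  also have "\<dots> \<le> R / 2" using imax_radius_le_half[of R] R by simp
  finally have "C \<subseteq> inner_disk R" using V(2) unfolding C_def inner_disk_def by auto
  moreover have "(\<Union>j<n. S j) \<inter> C = {}" unfolding S_def C_def cone_def by auto
  moreover have "(\<Union>j<n. S j) \<union> C = V"
    using V(2) ex_cone[of _ R "imax R"] unfolding S_def C_def n_def by fastforce
  ultimately show ?thesis using path_cover_append[OF ps(1) cs(1)] ps(2) cs(2) by fastforce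
qed

lemma three_le_card_if_demand_eq_0:
  assumes "0 < R" "finite V" "demand R V (imax R) j = 0"
  shows "3 \<le> card V"
proof -
  obtain i where i: "imax R = Suc i" using one_le_imax[OF assms(1)] by (cases "imax R") auto
  have "3 \<le> int (Ncnt R V (imax R) j)"
    using Ncnt_ge_if_demand_eq_0[of R V i j] assms(3) i
      demand_nonneg[of R V i "2 * j"] demand_nonneg[of R V i "2 * j + 1"] by simp
  moreover have "Ncnt R V (imax R) j \<le> card V" unfolding Ncnt_def using assms(2) by (simp add: card_mono)
  ultimately show ?thesis by linarith
qed

theorem mainTheorem10:
  shows "\<exists>R0. \<forall>R \<ge> R0. \<forall>V. finite V \<and> V \<subseteq> hdisk R \<and>
           (\<forall>j < ncount R (imax R). demand R V (imax R) j = 0)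
           \<longrightarrow> has_hamilton_cycle (hadj R) V"
proof (intro exI[of _ 400] allI impI)
  fix R :: real and V
  assume R: "400 \<le> R"
    and V: "finite V \<and> V \<subseteq> hdisk R \<and> (\<forall>j < ncount R (imax R). demand R V (imax R) j = 0)"
  obtain ps where "path_cover (hadj R) V ps" "\<forall>p\<in>set ps. hd p \<in> inner_disk R \<and> last p \<in> inner_disk R"
    using path_cover_ends_inner_disk[OF R] V by blast
  moreover have "3 \<le> card V"
    using three_le_card_if_demand_eq_0[of R V 0] R V by (simp add: ncount_def)
  ultimately show "has_hamilton_cycle (hadj R) V"
    using has_hamilton_cycle_if_path_cover inner_disk_clique by blast
qed

end
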